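(* Let $(X,|\cdot|)$ be a Banach space which is uniformly convex of type $p\geqslant 2$, i.e. there is $c>0$ with $\delta_X(\varepsilon)\geqslant c\,\varepsilon^p$ for all $\varepsilon\in(0,2]$. Let $Y$ be the tree with four vertices $a_0,a_1,a_2,a_2'$ and edges $a_0a_1$, $a_1a_2$, $a_1a_2'$, equipped with its graph (shortest-path) metric $d$. Then there is a constant $K=K(X)>0$ such that for every $D>0$ and every map $\varphi:Y\to X$ that is $D$-Lipschitz (i.e. $|\varphi(x)-\varphi(y)|\leqslant D\,d(x,y)$ for all $x,y\in Y$) and distance non-decreasing (i.e. $|\varphi(x)-\varphi(y)|\geqslant d(x,y)$ for all $x,y\in Y$), either \[|\varphi(a_0)-\varphi(a_2)|\leqslant 2\Big(D-\frac{K}{D^{p-1}}\Big)\] or \[|\varphi(a_0)-\varphi(a_2')|\leqslant 2\Big(D-\frac{K}{D^{p-1}}\Big).\]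
   Context: The modulus of (uniform) convexity of a Banach space $X$ with norm $|\cdot|$ is, for $\varepsilon\in(0,2]$, \[\delta_X(\varepsilon)=\inf\left\{1-\left|\tfrac{x+y}{2}\right| \;:\; |x|=|y|=1,\ |x-y|\geqslant\varepsilon\right\}.\] $X$ is called uniformly convex of type $p\geqslant 2$ if $\delta_X(\varepsilon)\geqslant c\,\varepsilon^p$ for some constant $c>0$ and all $\varepsilon\in(0,2]$. In the tree $Y$, $a_0$ is the root, $a_1$ its unique child, and $a_2,a_2'$ the two children of $a_1$. *)

theory Defs
  imports "HOL-Analysis.Analysis"
begin

definition modulus_convexity :: "('a::real_normed_vector) itself \<Rightarrow> real \<Rightarrow> real" where
  "modulus_convexity TYPE('a) \<epsilon> =
     Inf {1 - norm ((x + y) /\<^sub>R 2) | x y :: 'a. norm x = 1 \<and> norm y = 1 \<and> norm (x - y) \<ge> \<epsilon>}"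

definition unif_convex_type :: "('a::real_normed_vector) itself \<Rightarrow> real \<Rightarrow> bool" where
  "unif_convex_type T p \<longleftrightarrow> p \<ge> 2 \<and>
     (\<exists>c>0. \<forall>\<epsilon>. 0 < \<epsilon> \<and> \<epsilon> \<le> 2 \<longrightarrow> modulus_convexity T \<epsilon> \<ge> c * \<epsilon> powr p)"

datatype Yvert = A0 | A1 | A2 | A2'

fun ydepth :: "Yvert \<Rightarrow> nat" where
  "ydepth A0 = 0" | "ydepth A1 = 1" | "ydepth A2 = 2" | "ydepth A2' = 2"

fun ydist :: "Yvert \<Rightarrow> Yvert \<Rightarrow> real" where
  "ydist A2 A2' = 2"
| "ydist A2' A2 = 2"
| "ydist x y = \<bar>real (ydepth x) - real (ydepth y)\<bar>"

end

theory Submission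
  imports Defs
begin

text \<open>Write \<open>u = \<phi> a\<^sub>1 - \<phi> a\<^sub>0\<close>, \<open>v = \<phi> a\<^sub>2 - \<phi> a\<^sub>1\<close>, \<open>w = \<phi> a\<^sub>2' - \<phi> a\<^sub>1\<close>. If both
  \<open>|u + v|\<close> and \<open>|u + w|\<close> exceed \<open>2D - 2\<eta>\<close>, all three vectors have norm close to \<open>D\<close> and the
  directions of \<open>v\<close> and \<open>w\<close> both almost agree with that of \<open>u\<close>. But \<open>|v - w| \<ge> 2\<close> forces the
  directions of \<open>v\<close> and \<open>w\<close> apart by about \<open>1/D\<close>, so one of them is \<open>1/(2D)\<close> away from that
  of \<open>u\<close>, and uniform convexity then shortens the corresponding midpoint by \<open>c (2D)\<^sup>-\<^sup>p\<close>.
  This is incompatible with \<open>\<eta> = K / D\<^sup>p\<^sup>-\<^sup>1\<close> for small \<open>K\<close>.\<close>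

lemma modulus_convexity_le:
  fixes x y :: "'a::real_normed_vector"
  assumes "norm x = 1" "norm y = 1" "e \<le> norm (x - y)"
  shows "modulus_convexity TYPE('a) e \<le> 1 - norm ((x + y) /\<^sub>R 2)"
  unfolding modulus_convexity_def
proof (rule cInf_lower)
  show "bdd_below {1 - norm ((x + y) /\<^sub>R 2) |x y::'a. norm x = 1 \<and> norm y = 1 \<and> e \<le> norm (x - y)}"
  proof (rule bdd_belowI[of _ 0], clarify)
    fix a b :: 'a
    assume "norm a = 1" "norm b = 1"
    then show "0 \<le> 1 - norm ((a + b) /\<^sub>R 2)"
      using norm_triangle_ineq[of a b] by simp
  qed
qed (use assms in blast)

lemma norm_add_le_of_modulus_convexity:
  fixes x y :: "'a::real_normed_vector"
  assumes "norm x = 1" "norm y = 1" "e \<le> norm (x - y)"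
    and "c * e powr p \<le> modulus_convexity TYPE('a) e"
  shows "norm (x + y) \<le> 2 - 2 * c * e powr p"
  using modulus_convexity_le[OF assms(1-3)] assms(4) by simp

lemma norm_add_le_sgn_add:
  fixes u v :: "'a::real_normed_vector"
  assumes "norm u \<le> D" "norm v \<le> D"
  shows "norm (u + v) \<le> D * norm (sgn u + sgn v) + (D - norm u) + (D - norm v)"
proof -
  have norm_scaleR_sgn: "norm z *\<^sub>R sgn z = z" for z :: 'a
    by (cases "z = 0") (simp_all add: sgn_div_norm)
  have "u + v = norm u *\<^sub>R sgn u + norm v *\<^sub>R sgn v"
    by (simp only: norm_scaleR_sgn)
  also have "\<dots> = D *\<^sub>R (sgn u + sgn v) - (D - norm u) *\<^sub>R sgn u - (D - norm v) *\<^sub>R sgn v"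
    by (simp add: algebra_simps)
  finally have "norm (u + v) \<le> norm (D *\<^sub>R (sgn u + sgn v) - (D - norm u) *\<^sub>R sgn u)
      + norm ((D - norm v) *\<^sub>R sgn v)"
    by (simp only: norm_triangle_ineq4)
  also have "\<dots> \<le> norm (D *\<^sub>R (sgn u + sgn v)) + norm ((D - norm u) *\<^sub>R sgn u)
      + norm ((D - norm v) *\<^sub>R sgn v)"
    using norm_triangle_ineq4 by (rule add_right_mono)
  also have "\<dots> \<le> D * norm (sgn u + sgn v) + (D - norm u) + (D - norm v)"
  proof -
    have "norm (sgn z) \<le> 1" for z :: 'a
      by (simp add: norm_sgn)
    moreover have "0 \<le> D" "0 \<le> D - norm u" "0 \<le> D - norm v"
      using assms norm_ge_zero[of u] by linarith+
    ultimately show ?thesis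
      using mult_left_le[of "norm (sgn u)" "D - norm u"] mult_left_le[of "norm (sgn v)" "D - norm v"]
      by simp
  qed
  finally show ?thesis .
qed

lemma tripod_modulus_bound:
  fixes u v w :: "'a::real_normed_vector"
  assumes norms: "norm u \<le> D" "norm v \<le> D" "norm w \<le> D"
    and branches: "2 \<le> norm (v - w)"
    and small: "\<eta> \<le> 1/4"
    and long_uv: "2 * D - 2 * \<eta> < norm (u + v)"
    and long_uw: "2 * D - 2 * \<eta> < norm (u + w)"
    and convex: "c * (1 / (2 * D)) powr p \<le> modulus_convexity TYPE('a) (1 / (2 * D))"
  shows "c * D * (1 / (2 * D)) powr p < 2 * \<eta>"
proof -
  have "2 \<le> 2 * D"
    using branches norm_triangle_ineq4[of v w] norms by linarith
  then have D: "D > 0" by simp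
  have long_u: "D - 2 * \<eta> < norm u"
    using long_uv norm_triangle_ineq[of u v] norms by linarith
  have long_v: "D - 2 * \<eta> < norm v" and long_w: "D - 2 * \<eta> < norm w"
    using long_uv long_uw norm_triangle_ineq[of u v] norm_triangle_ineq[of u w] norms by linarith+
  have "0 < norm u" "0 < norm v" "0 < norm w"
    using long_u long_v long_w \<open>2 \<le> 2 * D\<close> small by linarith+
  then have units: "norm (sgn u) = 1" "norm (sgn v) = 1" "norm (sgn w) = 1"
    by (simp_all add: norm_sgn)
  have near_v: "2 * D - 4 * \<eta> < D * norm (sgn u + sgn v)"
    using norm_add_le_sgn_add[of u D v] norms long_uv norm_triangle_ineq[of u v] by linarith
  have near_w: "2 * D - 4 * \<eta> < D * norm (sgn u + sgn w)"
    using norm_add_le_sgn_add[of u D w] norms long_uw norm_triangle_ineq[of u w] by linarith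
  have "norm (v - w) \<le> D * norm (sgn v - sgn w) + (D - norm v) + (D - norm w)"
    using norm_add_le_sgn_add[of v D "- w"] norms by (simp add: sgn_minus)
  then have "1 \<le> D * norm (sgn v - sgn w)"
    using branches long_v long_w small by linarith
  also have "\<dots> \<le> D * (norm (sgn u - sgn v) + norm (sgn u - sgn w))"
    using D norm_triangle_ineq4[of "sgn u - sgn w" "sgn u - sgn v"] by (intro mult_left_mono) simp_all
  also have "\<dots> = D * norm (sgn u - sgn v) + D * norm (sgn u - sgn w)"
    by (rule distrib_left)
  finally have "1 / 2 \<le> D * norm (sgn u - sgn v) \<or> 1 / 2 \<le> D * norm (sgn u - sgn w)"
    by linarith
  then have "1 / (2 * D) \<le> norm (sgn u - sgn v) \<or> 1 / (2 * D) \<le> norm (sgn u - sgn w)"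
    using D by (simp add: pos_divide_le_eq algebra_simps)
  then obtain t where t: "norm t = 1" "1 / (2 * D) \<le> norm (sgn u - t)"
    and near_t: "2 * D - 4 * \<eta> < D * norm (sgn u + t)"
    using near_v near_w units by blast
  have "D * norm (sgn u + t) \<le> D * (2 - 2 * c * (1 / (2 * D)) powr p)"
    using norm_add_le_of_modulus_convexity[OF units(1) t convex] D by simp
  also have "\<dots> = 2 * D - 2 * (c * D * (1 / (2 * D)) powr p)"
    by (simp only: right_diff_distrib mult_ac)
  finally show ?thesis
    using near_t by linarith
qed

lemma tree_map_short_branch:
  fixes \<phi> :: "Yvert \<Rightarrow> 'a::real_normed_vector"
  assumes lip: "\<forall>x y. norm (\<phi> x - \<phi> y) \<le> D * ydist x y"
    and expand: "\<forall>x y. norm (\<phi> x - \<phi> y) \<ge> ydist x y"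
    and convex: "\<And>e. 0 < e \<Longrightarrow> e \<le> 2 \<Longrightarrow> c * e powr p \<le> modulus_convexity TYPE('a) e"
    and small: "\<eta> \<le> 1/4" "2 * \<eta> \<le> c * D * (1 / (2 * D)) powr p"
  shows "norm (\<phi> A0 - \<phi> A2) \<le> 2 * (D - \<eta>) \<or> norm (\<phi> A0 - \<phi> A2') \<le> 2 * (D - \<eta>)"
proof (rule ccontr)
  assume "\<not> ?thesis"
  then have long: "2 * D - 2 * \<eta> < norm (\<phi> A1 - \<phi> A0 + (\<phi> A2 - \<phi> A1))"
    "2 * D - 2 * \<eta> < norm (\<phi> A1 - \<phi> A0 + (\<phi> A2' - \<phi> A1))"
    by (auto simp: norm_minus_commute)
  have edges: "norm (\<phi> A1 - \<phi> A0) \<le> D" "norm (\<phi> A2 - \<phi> A1) \<le> D" "norm (\<phi> A2' - \<phi> A1) \<le> D"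
    using lip[rule_format, of A1 A0] lip[rule_format, of A2 A1] lip[rule_format, of A2' A1] by simp_all
  have branches: "2 \<le> norm (\<phi> A2 - \<phi> A1 - (\<phi> A2' - \<phi> A1))"
    using expand[rule_format, of A2 A2'] by simp
  have "1 \<le> D"
    using lip[rule_format, of A1 A0] expand[rule_format, of A1 A0] by simp
  then have "c * (1 / (2 * D)) powr p \<le> modulus_convexity TYPE('a) (1 / (2 * D))"
    by (intro convex) (auto simp: divide_le_eq)
  from tripod_modulus_bound[OF edges branches small(1) long this] small(2) show False
    by linarith
qed

theorem lemma1:
  fixes p :: real
  assumes "unif_convex_type TYPE('a::banach) p"
  shows "\<exists>K>0. \<forall>D>0. \<forall>\<phi> :: Yvert \<Rightarrow> 'a.
           (\<forall>x y. norm (\<phi> x - \<phi> y) \<le> D * ydist x y) \<and>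
           (\<forall>x y. norm (\<phi> x - \<phi> y) \<ge> ydist x y) \<longrightarrow>
           norm (\<phi> A0 - \<phi> A2) \<le> 2 * (D - K / D powr (p - 1)) \<or>
           norm (\<phi> A0 - \<phi> A2') \<le> 2 * (D - K / D powr (p - 1))"
proof -
  from assms obtain c where "p \<ge> 2" "c > 0"
    and convex: "\<And>e. 0 < e \<Longrightarrow> e \<le> 2 \<Longrightarrow> c * e powr p \<le> modulus_convexity TYPE('a) e"
    unfolding unif_convex_type_def by blast
  define K where "K = min (1/4) (c / 2 powr p / 2)"
  have K: "K > 0" "K \<le> 1/4" "2 * K \<le> c / 2 powr p"
    using \<open>c > 0\<close> by (auto simp: K_def)
  have "norm (\<phi> A0 - \<phi> A2) \<le> 2 * (D - K / D powr (p - 1)) \<or>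
        norm (\<phi> A0 - \<phi> A2') \<le> 2 * (D - K / D powr (p - 1))"
    if lip: "\<forall>x y. norm (\<phi> x - \<phi> y) \<le> D * ydist x y"
      and expand: "\<forall>x y. norm (\<phi> x - \<phi> y) \<ge> ydist x y" for D and \<phi> :: "Yvert \<Rightarrow> 'a"
  proof (rule tree_map_short_branch[OF lip expand convex])
    have "1 \<le> D"
      using lip[rule_format, of A1 A0] expand[rule_format, of A1 A0] by simp
    then have "1 \<le> D powr (p - 1)"
      using \<open>p \<ge> 2\<close> by (simp add: ge_one_powr_ge_zero)
    then show "K / D powr (p - 1) \<le> 1/4"
      using K by (simp add: divide_le_eq)
    have "2 * (K / D powr (p - 1)) \<le> c / 2 powr p / D powr (p - 1)"
      unfolding times_divide_eq_right using K \<open>1 \<le> D powr (p - 1)\<close> by (intro divide_right_mono) simp_all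
    also have "\<dots> = c * D * (1 / (2 * D)) powr p"
      using \<open>1 \<le> D\<close> by (simp add: powr_divide powr_mult powr_diff)
    finally show "2 * (K / D powr (p - 1)) \<le> c * D * (1 / (2 * D)) powr p" .
  qed
  then show ?thesis
    using K by blast
qed

end
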